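(* Let $(L_i)_{i\in I}$ be a family of lattices with zero, pairwise intersecting in $\{0\}$, and let $L=\coprod^0_{i\in I}L_i$ with each $L_i$ identified with its canonical copy in $L$. For each $i$, let $\varepsilon_i\colon\operatorname{Id}L_i\to\operatorname{Id}L$, $X\mapsto L\mathbin{\downarrow}X=\{y\in L:(\exists x\in X)(y\le x)\}$. Let $\mathbf{p}$ be a lattice term with variables from $I\times\omega$ and let $\vec X=(X_{i,n})_{(i,n)\in I\times\omega}\in\prod_{(i,n)\in I\times\omega}\operatorname{Id}L_i$, and put $\vec\varepsilon\vec X=(\varepsilon_i(X_{i,n}))_{(i,n)\in I\times\omega}\in(\operatorname{Id}L)^{I\times\omega}$. Then, evaluating $\mathbf{p}$ in $\operatorname{Id}L$, $$\mathbf{p}(\vec\varepsilon\vec X)=L\mathbin{\downarrow}\{\mathbf{p}(\vec x): \vec x=(x_{i,n}),\ x_{i,n}\in X_{i,n}\text{ for all }(i,n)\in I\times\omega\},$$ where $\mathbf{p}(\vec x)$ is evaluated in $L$.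
   Context: $\coprod^0$ denotes the coproduct in the category of lattices with zero and zero-preserving homomorphisms; $\omega$ is the set of natural numbers. $\operatorname{Id}K$ is the lattice of all ideals (nonempty lower subsets closed under finite joins) of a lattice $K$, ordered by inclusion. *)

theory Defs
  imports Main
begin

datatype 'v lterm = Var 'v | Join "'v lterm" "'v lterm" | Meet "'v lterm" "'v lterm"

fun eval_lat :: "('v \<Rightarrow> 'b::lattice) \<Rightarrow> 'v lterm \<Rightarrow> 'b" where
  "eval_lat \<rho> (Var v) = \<rho> v"
| "eval_lat \<rho> (Join p q) = sup (eval_lat \<rho> p) (eval_lat \<rho> q)"
| "eval_lat \<rho> (Meet p q) = inf (eval_lat \<rho> p) (eval_lat \<rho> q)"

definition ideal_in :: "'a::lattice set \<Rightarrow> 'a set \<Rightarrow> bool" where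
  "ideal_in S X \<longleftrightarrow> X \<subseteq> S \<and> X \<noteq> {} \<and>
     (\<forall>x\<in>X. \<forall>y\<in>S. y \<le> x \<longrightarrow> y \<in> X) \<and>
     (\<forall>x\<in>X. \<forall>y\<in>X. sup x y \<in> X)"

text \<open>Down-set generated by a subset of 'a (that is, L \<down> A, with L = UNIV).\<close>
definition down :: "'a::order set \<Rightarrow> 'a set" where
  "down A = {y. \<exists>x\<in>A. y \<le> x}"

text \<open>Join and meet in Id L (L = UNIV of type 'a), ordered by inclusion.\<close>
definition id_join :: "'a::lattice set \<Rightarrow> 'a set \<Rightarrow> 'a set" where
  "id_join I J = \<Inter>{K. ideal_in UNIV K \<and> I \<union> J \<subseteq> K}"

definition id_meet :: "'a::lattice set \<Rightarrow> 'a set \<Rightarrow> 'a set" where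
  "id_meet I J = I \<inter> J"

fun eval_id :: "('v \<Rightarrow> 'a::lattice set) \<Rightarrow> 'v lterm \<Rightarrow> 'a set" where
  "eval_id \<rho> (Var v) = \<rho> v"
| "eval_id \<rho> (Join p q) = id_join (eval_id \<rho> p) (eval_id \<rho> q)"
| "eval_id \<rho> (Meet p q) = id_meet (eval_id \<rho> p) (eval_id \<rho> q)"

definition is_lub :: "('k \<Rightarrow> 'k \<Rightarrow> bool) \<Rightarrow> 'k set \<Rightarrow> 'k \<Rightarrow> 'k \<Rightarrow> 'k \<Rightarrow> bool" where
  "is_lub le K a b c \<longleftrightarrow> c \<in> K \<and> le a c \<and> le b c \<and>
     (\<forall>d\<in>K. le a d \<and> le b d \<longrightarrow> le c d)"

definition is_glb :: "('k \<Rightarrow> 'k \<Rightarrow> bool) \<Rightarrow> 'k set \<Rightarrow> 'k \<Rightarrow> 'k \<Rightarrow> 'k \<Rightarrow> bool" where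
  "is_glb le K a b c \<longleftrightarrow> c \<in> K \<and> le c a \<and> le c b \<and>
     (\<forall>d\<in>K. le d a \<and> le d b \<longrightarrow> le d c)"

definition is_least :: "('k \<Rightarrow> 'k \<Rightarrow> bool) \<Rightarrow> 'k set \<Rightarrow> 'k \<Rightarrow> bool" where
  "is_least le K z \<longleftrightarrow> z \<in> K \<and> (\<forall>d\<in>K. le z d)"

definition lattice0_on :: "'k set \<Rightarrow> ('k \<Rightarrow> 'k \<Rightarrow> bool) \<Rightarrow> bool" where
  "lattice0_on K le \<longleftrightarrow>
     (\<forall>a\<in>K. le a a) \<and>
     (\<forall>a\<in>K. \<forall>b\<in>K. le a b \<and> le b a \<longrightarrow> a = b) \<and>
     (\<forall>a\<in>K. \<forall>b\<in>K. \<forall>c\<in>K. le a b \<and> le b c \<longrightarrow> le a c) \<and>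
     (\<forall>a\<in>K. \<forall>b\<in>K. \<exists>c. is_lub le K a b c) \<and>
     (\<forall>a\<in>K. \<forall>b\<in>K. \<exists>c. is_glb le K a b c) \<and>
     (\<exists>z. is_least le K z)"

definition hom0_on :: "'a::bounded_lattice_bot set \<Rightarrow> 'k set \<Rightarrow> ('k \<Rightarrow> 'k \<Rightarrow> bool)
    \<Rightarrow> ('a \<Rightarrow> 'k) \<Rightarrow> bool" where
  "hom0_on S K le f \<longleftrightarrow>
     (\<forall>x\<in>S. f x \<in> K) \<and>
     (\<forall>x\<in>S. \<forall>y\<in>S. is_lub le K (f x) (f y) (f (sup x y))) \<and>
     (\<forall>x\<in>S. \<forall>y\<in>S. is_glb le K (f x) (f y) (f (inf x y))) \<and>
     is_least le K (f bot)"

definition sublattice0 :: "'a::bounded_lattice_bot set \<Rightarrow> bool" where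
  "sublattice0 S \<longleftrightarrow> bot \<in> S \<and> (\<forall>x\<in>S. \<forall>y\<in>S. sup x y \<in> S \<and> inf x y \<in> S)"

text \<open>The whole lattice with zero 'a is the 0-coproduct of the sublattices LL i
  (with inclusion maps as canonical maps), with respect to target lattices with zero
  whose carrier lies in the type 'k.\<close>
definition is_coproduct0 :: "('i \<Rightarrow> 'a::bounded_lattice_bot set) \<Rightarrow> 'k itself \<Rightarrow> bool" where
  "is_coproduct0 LL _ \<longleftrightarrow>
     (\<forall>i. sublattice0 (LL i)) \<and>
     (\<forall>(K::'k set) le g. lattice0_on K le \<and> (\<forall>i. hom0_on (LL i) K le (g i)) \<longrightarrow>
        (\<exists>!f. hom0_on UNIV K le f \<and> (\<forall>i. \<forall>x\<in>LL i. f x = g i x)))"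

end

theory Submission
  imports Defs "HOL-Library.FuncSet"
begin

text \<open>Only the fact that every \<open>X (i, n)\<close> is a nonempty join-closed subset of \<open>L\<close> matters. Choices \<open>x \<in> \<Pi> v. X v\<close> form an
  upward directed set under the pointwise order, and term evaluation is monotone in the valuation,
  so the values of a term form a directed set whose down-set is an ideal. By induction on the
  term: a meet of two such ideals is their intersection, a join is the down-set of pairwise joins,
  and in either case two witnesses \<open>x\<close>, \<open>y\<close> can be replaced by the single witness
  \<open>sup x y\<close>.\<close>

definition updirected :: "'a::order set \<Rightarrow> bool" where
  "updirected S \<longleftrightarrow> (\<forall>a\<in>S. \<forall>b\<in>S. \<exists>c\<in>S. a \<le> c \<and> b \<le> c)"

lemma updirected_image_mono:
  assumes "mono f" and "updirected C"
  shows "updirected (f ` C)"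
  using assms unfolding updirected_def by (simp add: image_iff) (meson monoD)

lemma updirected_Pi_sup_closed:
  assumes "\<And>v a b. a \<in> X v \<Longrightarrow> b \<in> X v \<Longrightarrow> sup a b \<in> X v"
  shows "updirected (Pi UNIV X :: ('v \<Rightarrow> 'a::lattice) set)"
  unfolding updirected_def
proof (intro ballI)
  fix x y assume "x \<in> Pi UNIV X" "y \<in> Pi UNIV X"
  then have "sup x y \<in> Pi UNIV X" using assms by (simp add: Pi_iff)
  then show "\<exists>z\<in>Pi UNIV X. x \<le> z \<and> y \<le> z" by (blast intro: sup_ge1 sup_ge2)
qed

lemma ideal_in_down:
  fixes S :: "'a::lattice set"
  assumes "S \<noteq> {}" and "updirected S"
  shows "ideal_in UNIV (down S)"
  unfolding ideal_in_def down_def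
proof (intro conjI ballI impI)
  fix x y assume "x \<in> {y. \<exists>x\<in>S. y \<le> x}" "y \<in> {y. \<exists>x\<in>S. y \<le> x}"
  then obtain a b where "a \<in> S" "b \<in> S" "x \<le> a" "y \<le> b" by auto
  with \<open>updirected S\<close> obtain c where "c \<in> S" "x \<le> c" "y \<le> c"
    unfolding updirected_def by (meson order_trans)
  then show "sup x y \<in> {y. \<exists>x\<in>S. y \<le> x}" by auto
qed (use assms(1) order_trans in auto)

lemma id_join_ideals:
  fixes I J :: "'a::lattice set"
  assumes I: "ideal_in UNIV I" and J: "ideal_in UNIV J"
  shows "id_join I J = down {sup a b | a b. a \<in> I \<and> b \<in> J}"
proof -
  let ?S = "{sup a b | a b. a \<in> I \<and> b \<in> J}"
  have "updirected ?S"
    unfolding updirected_def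
  proof (intro ballI)
    fix s t assume "s \<in> ?S" "t \<in> ?S"
    then obtain a b a' b' where "a \<in> I" "b \<in> J" "a' \<in> I" "b' \<in> J"
      and "s = sup a b" "t = sup a' b'" by blast
    moreover from this have "sup a a' \<in> I" "sup b b' \<in> J"
      using I J unfolding ideal_in_def by auto
    ultimately show "\<exists>c\<in>?S. s \<le> c \<and> t \<le> c"
      by (intro bexI[of _ "sup (sup a a') (sup b b')"]) (auto simp: le_supI1 le_supI2 sup_mono)
  qed
  moreover have "I \<noteq> {}" "J \<noteq> {}" using I J unfolding ideal_in_def by auto
  ultimately have ideal: "ideal_in UNIV (down ?S)"
    by (intro ideal_in_down) auto
  have "I \<union> J \<subseteq> down ?S"
    using \<open>I \<noteq> {}\<close> \<open>J \<noteq> {}\<close> unfolding down_def by (fastforce intro: sup_ge1 sup_ge2)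
  moreover have "down ?S \<subseteq> K" if "ideal_in UNIV K" "I \<union> J \<subseteq> K" for K
    using that unfolding ideal_in_def down_def by blast
  ultimately show ?thesis
    unfolding id_join_def using ideal by blast
qed

lemma down_sups_of_down_images:
  fixes f g :: "'c::order \<Rightarrow> 'a::lattice"
  assumes "updirected C" and "mono f" and "mono g"
  shows "down {sup a b | a b. a \<in> down (f ` C) \<and> b \<in> down (g ` C)}
           = down ((\<lambda>x. sup (f x) (g x)) ` C)"
proof
  show "down {sup a b | a b. a \<in> down (f ` C) \<and> b \<in> down (g ` C)}
          \<subseteq> down ((\<lambda>x. sup (f x) (g x)) ` C)"
  proof
    fix z assume "z \<in> down {sup a b | a b. a \<in> down (f ` C) \<and> b \<in> down (g ` C)}"
    then obtain a b x y where "z \<le> sup a b" "a \<le> f x" "b \<le> g y" "x \<in> C" "y \<in> C"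
      unfolding down_def by blast
    moreover obtain w where "w \<in> C" "x \<le> w" "y \<le> w"
      using \<open>updirected C\<close> \<open>x \<in> C\<close> \<open>y \<in> C\<close> unfolding updirected_def by blast
    ultimately have "z \<le> sup (f w) (g w)"
      using assms(2,3) by (meson monoD order_trans sup_mono)
    with \<open>w \<in> C\<close> show "z \<in> down ((\<lambda>x. sup (f x) (g x)) ` C)"
      unfolding down_def by blast
  qed
  show "down ((\<lambda>x. sup (f x) (g x)) ` C)
          \<subseteq> down {sup a b | a b. a \<in> down (f ` C) \<and> b \<in> down (g ` C)}"
    unfolding down_def by blast
qed

lemma down_infs_of_down_images:
  fixes f g :: "'c::order \<Rightarrow> 'a::lattice"
  assumes "updirected C" and "mono f" and "mono g"
  shows "down (f ` C) \<inter> down (g ` C) = down ((\<lambda>x. inf (f x) (g x)) ` C)"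
proof
  show "down (f ` C) \<inter> down (g ` C) \<subseteq> down ((\<lambda>x. inf (f x) (g x)) ` C)"
  proof
    fix z assume "z \<in> down (f ` C) \<inter> down (g ` C)"
    then obtain x y where "x \<in> C" "y \<in> C" "z \<le> f x" "z \<le> g y"
      unfolding down_def by blast
    moreover obtain w where "w \<in> C" "x \<le> w" "y \<le> w"
      using \<open>updirected C\<close> \<open>x \<in> C\<close> \<open>y \<in> C\<close> unfolding updirected_def by blast
    ultimately have "z \<le> inf (f w) (g w)"
      using assms(2,3) by (meson le_inf_iff monoD order_trans)
    with \<open>w \<in> C\<close> show "z \<in> down ((\<lambda>x. inf (f x) (g x)) ` C)"
      unfolding down_def by blast
  qed
  show "down ((\<lambda>x. inf (f x) (g x)) ` C) \<subseteq> down (f ` C) \<inter> down (g ` C)"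
    unfolding down_def by (blast intro: le_infE order_trans)
qed

definition term_values :: "('v \<Rightarrow> 'a::lattice set) \<Rightarrow> 'v lterm \<Rightarrow> 'a set" where
  "term_values X p = (\<lambda>x. eval_lat x p) ` Pi UNIV X"

lemma mono_eval_lat: "mono (\<lambda>x. eval_lat x p)"
  by (rule monoI, induction p) (auto simp: le_fun_def intro: le_supI1 le_supI2 le_infI1 le_infI2)

lemma eval_id_down_eq_down_term_values:
  fixes X :: "'v \<Rightarrow> 'a::lattice set"
  assumes nonempty: "\<And>v. X v \<noteq> {}"
    and sup_closed: "\<And>v a b. a \<in> X v \<Longrightarrow> b \<in> X v \<Longrightarrow> sup a b \<in> X v"
  shows "eval_id (\<lambda>v. down (X v)) p = down (term_values X p)"
proof -
  have directed: "updirected (Pi UNIV X)"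
    using sup_closed by (rule updirected_Pi_sup_closed)
  have "Pi UNIV X \<noteq> {}"
    using nonempty by simp
  then have ideal: "ideal_in UNIV (down (term_values X q))" for q
    unfolding term_values_def
    by (intro ideal_in_down updirected_image_mono mono_eval_lat directed) simp
  show ?thesis
  proof (induction p)
    case (Var v)
    have "(\<lambda>x. x v) ` Pi UNIV X = X v"
      using image_projection_PiE[of v UNIV X] nonempty by (simp add: PiE_UNIV_domain)
    then show ?case
      by (simp add: term_values_def)
  next
    case (Join p q)
    then show ?case
      using ideal[of p] ideal[of q]
      by (simp add: id_join_ideals down_sups_of_down_images[OF directed mono_eval_lat mono_eval_lat]
          term_values_def)
  next
    case (Meet p q)
    then show ?case
      by (simp add: id_meet_def down_infs_of_down_images[OF directed mono_eval_lat mono_eval_lat]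
          term_values_def)
  qed
qed


theorem lemma5p1:
  fixes LL :: "'i \<Rightarrow> 'a::bounded_lattice_bot set"
    and p :: "('i \<times> nat) lterm"
    and X :: "'i \<times> nat \<Rightarrow> 'a set"
  assumes disj: "\<And>i j. i \<noteq> j \<Longrightarrow> LL i \<inter> LL j = {bot}"
    and coprod: "is_coproduct0 LL TYPE('k)"
    and X_ideal: "\<And>i n. ideal_in (LL i) (X (i, n))"
  shows "eval_id (\<lambda>(i, n). down (X (i, n))) p =
         down {eval_lat x p | x. \<forall>i n. x (i, n) \<in> X (i, n)}"
proof -
  have nonempty: "X v \<noteq> {}" for v
    using X_ideal[of "fst v" "snd v"] by (simp add: ideal_in_def)
  have sup_closed: "sup a b \<in> X v" if "a \<in> X v" "b \<in> X v" for v a b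
    using X_ideal[of "fst v" "snd v"] that by (simp add: ideal_in_def)
  have "(\<lambda>(i, n). down (X (i, n))) = (\<lambda>v. down (X v))"
    by auto
  moreover have "{eval_lat x p | x. \<forall>i n. x (i, n) \<in> X (i, n)} = term_values X p"
    by (auto simp: term_values_def Pi_iff)
  ultimately show ?thesis
    using eval_id_down_eq_down_term_values[OF nonempty sup_closed] by simp
qed

end
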